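(* Let $1\le k<N/2$ and $l\ge 1$. Consider the problem of identifying an unknown $x\in\{0,1\}^N$ with $wt(x)=k$ using the balance oracle, under the restriction that every query string (in every superposition) places at least $l$ coins on the pans. Then every quantum algorithm that identifies $x$ with bounded error needs $\Omega((lk/N)^{1/4})$ queries. In particular, if there is a constant $c$ such that at least $N/c$ coins must be placed on the pans in every query, then $\Omega(k^{1/4})$ queries are necessary.
   Context: Counterfeit coin model: $x\in\{0,1\}^N$, $x_i=1$ meaning coin $i$ is false; $k=wt(x)$ (Hamming weight) is known and $k<N/2$. For $l'\le\lfloor N/2\rfloor$, $Q_{l'}$ is the set of $q\in\{0,1,-1\}^N$ with exactly $l'$ entries $1$ and $l'$ entries $-1$ ($1$: left pan, $-1$: right pan, $0$: not weighed). For such $q$, $\chi(x;q)=0$ if $\sum_iq_ix_i=0$ (balanced) and $1$ otherwise (tilted). The balance oracle is the unitary $|q\rangle\mapsto(-1)^{\chi(x;q)}|q\rangle$ (equivalently $|q,a\rangle\mapsto|q,a\oplus\chi(x;q)\rangle$). The restriction "at least $l$ coins placed on the pans" means only query strings $q$ with at least $l$ nonzero entries may be queried. Bounded error: the output equals $x$ with probability at least a fixed constant $>1/2$ (e.g. $2/3$) for every admissible $x$. *)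

theory Defs
  imports Complex_Main
begin

text \<open>Coins are indexed by 0..N-1. An unknown string x in {0,1}^N is represented by the
set of its 1-positions (the false coins), a subset of {..<N}. A query string
q in {0,1,-1}^N is a function nat => int vanishing outside {..<N}.\<close>

type_synonym qstring = "nat \<Rightarrow> int"
type_synonym basis = "qstring \<times> nat"   \<comment> \<open>query register, workspace register\<close>
type_synonym qstate = "basis \<Rightarrow> complex"
type_synonym qop = "basis \<Rightarrow> basis \<Rightarrow> complex"  \<comment> \<open>matrix entries U b a\<close>

definition query_string :: "nat \<Rightarrow> nat \<Rightarrow> qstring \<Rightarrow> bool" where
  "query_string N l' q \<longleftrightarrow>
     (\<forall>i. q i \<in> {-1, 0, 1}) \<and> (\<forall>i. N \<le> i \<longrightarrow> q i = 0) \<and> l' \<le> N div 2 \<and>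
     card {i. q i = 1} = l' \<and> card {i. q i = -1} = l'"

definition admissible_queries :: "nat \<Rightarrow> nat \<Rightarrow> qstring set" where
  "admissible_queries N l = {q. (\<exists>l'. query_string N l' q) \<and> l \<le> card {i. q i \<noteq> 0}}"

definition tilted :: "nat \<Rightarrow> nat set \<Rightarrow> qstring \<Rightarrow> bool" where
  "tilted N x q \<longleftrightarrow> (\<Sum>i<N. q i * (if i \<in> x then 1 else 0)) \<noteq> 0"

definition basis_set :: "nat \<Rightarrow> nat \<Rightarrow> nat \<Rightarrow> basis set" where
  "basis_set N l m = admissible_queries N l \<times> {..<m}"

definition balance_orcl :: "nat \<Rightarrow> nat set \<Rightarrow> qstate \<Rightarrow> qstate" where
  "balance_orcl N x \<psi> = (\<lambda>(q, w). (if tilted N x q then -1 else 1) * \<psi> (q, w))"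

definition unitary_on :: "basis set \<Rightarrow> qop \<Rightarrow> bool" where
  "unitary_on B U \<longleftrightarrow>
     (\<forall>a\<in>B. \<forall>a'\<in>B. (\<Sum>b\<in>B. cnj (U b a) * U b a') = (if a = a' then 1 else 0))"

definition apply_op :: "basis set \<Rightarrow> qop \<Rightarrow> qstate \<Rightarrow> qstate" where
  "apply_op B U \<psi> = (\<lambda>b. if b \<in> B then (\<Sum>a\<in>B. U b a * \<psi> a) else 0)"

fun run :: "basis set \<Rightarrow> nat \<Rightarrow> nat set \<Rightarrow> qstate \<Rightarrow> qop list \<Rightarrow> qstate" where
  "run B N x \<psi> [] = \<psi>"
| "run B N x \<psi> (U # Us) = run B N x (apply_op B U (balance_orcl N x \<psi>)) Us"

text \<open>Final state U_T O_x ... U_1 O_x U_0 psi0; the number of queries is length Us.\<close>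
definition final_state :: "nat \<Rightarrow> nat \<Rightarrow> nat \<Rightarrow> nat set \<Rightarrow> qstate \<Rightarrow> qop \<Rightarrow> qop list \<Rightarrow> qstate" where
  "final_state N l m x \<psi>0 U0 Us =
     run (basis_set N l m) N x (apply_op (basis_set N l m) U0 \<psi>0) Us"

definition success_prob :: "nat \<Rightarrow> nat \<Rightarrow> nat \<Rightarrow> nat set \<Rightarrow> qstate \<Rightarrow> qop \<Rightarrow> qop list
    \<Rightarrow> (basis \<Rightarrow> nat set) \<Rightarrow> real" where
  "success_prob N l m x \<psi>0 U0 Us out =
     (\<Sum>b\<in>{b\<in>basis_set N l m. out b = x}. (cmod (final_state N l m x \<psi>0 U0 Us b))\<^sup>2)"

definition identifies :: "nat \<Rightarrow> nat \<Rightarrow> nat \<Rightarrow> nat \<Rightarrow> qstate \<Rightarrow> qop \<Rightarrow> qop list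
    \<Rightarrow> (basis \<Rightarrow> nat set) \<Rightarrow> bool" where
  "identifies N k l m \<psi>0 U0 Us out \<longleftrightarrow>
     (\<Sum>b\<in>basis_set N l m. (cmod (\<psi>0 b))\<^sup>2) = 1 \<and>
     unitary_on (basis_set N l m) U0 \<and> (\<forall>U\<in>set Us. unitary_on (basis_set N l m) U) \<and>
     (\<forall>x. x \<subseteq> {..<N} \<and> card x = k \<longrightarrow> success_prob N l m x \<psi>0 U0 Us out \<ge> 2/3)"

end

theory Submission
  imports Defs "HOL-Analysis.L2_Norm" "HOL-Analysis.Convex"
begin

text \<open>
  Hybrid argument: compare the run for a candidate \<open>x\<close> with the run in which every query
  answers ``tilted''. The latter does not depend on \<open>x\<close>, so it outputs most candidates with
  small probability, while each query lets the true run drift from it only by the amplitude on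
  queries that are balanced for \<open>x\<close>. Averaged over all weight-\<open>k\<close> strings \<open>x\<close>, this amplitude
  is at most \<open>\<surd>\<epsilon>\<close>, where \<open>\<epsilon>\<close> bounds the fraction of strings for which a single admissible
  query balances; hence \<open>T \<ge> c / \<surd>\<epsilon>\<close> queries are needed.

  A query placing \<open>l' \<ge> l/2\<close> coins on each pan balances for at most a fraction
  \<open>\<epsilon> = O(\<surd>(N / (l k)))\<close> of the strings: pair the coins of the two pans, and note that
  exchanging the coins of any set of pairs permutes the strings. For a string splitting \<open>m\<close> pairs,
  the exchanges that leave it balanced are those whose signed sum over the split pairs vanishes, a
  fraction at most \<open>C(m, m/2) / 2^m \<le> 1 / \<surd>(m + 1)\<close>; and a second moment computation shows
  that \<open>m\<close> is typically of order \<open>l k / N\<close>.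
\<close>

section \<open>The hybrid argument\<close>

definition state_norm :: "basis set \<Rightarrow> qstate \<Rightarrow> real" where
  "state_norm B \<psi> = L2_set (\<lambda>b. cmod (\<psi> b)) B"

lemma state_norm_sq: "(state_norm B \<psi>)\<^sup>2 = (\<Sum>b\<in>B. (cmod (\<psi> b))\<^sup>2)"
  unfolding state_norm_def L2_set_def by (simp add: sum_nonneg)

lemma state_norm_eqI:
  "(\<Sum>b\<in>B. (cmod (\<psi> b))\<^sup>2) = (\<Sum>b\<in>B. (cmod (\<phi> b))\<^sup>2) \<Longrightarrow> state_norm B \<psi> = state_norm B \<phi>"
  unfolding state_norm_def L2_set_def by simp

lemma state_norm_triangle: "state_norm B (\<lambda>b. \<psi> b + \<phi> b) \<le> state_norm B \<psi> + state_norm B \<phi>"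
proof -
  have "state_norm B (\<lambda>b. \<psi> b + \<phi> b) \<le> L2_set (\<lambda>b. cmod (\<psi> b) + cmod (\<phi> b)) B"
    unfolding state_norm_def by (rule L2_set_mono) (auto simp: norm_triangle_ineq)
  also have "\<dots> \<le> state_norm B \<psi> + state_norm B \<phi>"
    unfolding state_norm_def by (rule L2_set_triangle_ineq)
  finally show ?thesis .
qed

lemma state_norm_mono_set: "finite B \<Longrightarrow> S \<subseteq> B \<Longrightarrow> state_norm S \<psi> \<le> state_norm B \<psi>"
  unfolding state_norm_def L2_set_def by (intro real_sqrt_le_mono sum_mono2) auto

lemma sum_sq_apply_op:
  assumes "finite B" and U: "unitary_on B U"
  shows "(\<Sum>b\<in>B. (cmod (apply_op B U \<psi> b))\<^sup>2) = (\<Sum>a\<in>B. (cmod (\<psi> a))\<^sup>2)"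
proof -
  have "complex_of_real (\<Sum>b\<in>B. (cmod (apply_op B U \<psi> b))\<^sup>2)
      = (\<Sum>b\<in>B. \<Sum>a\<in>B. \<Sum>a'\<in>B. \<psi> a * cnj (\<psi> a') * (cnj (U b a') * U b a))"
    unfolding of_real_sum complex_norm_square
    by (simp add: apply_op_def sum_distrib_left sum_distrib_right mult_ac)
      (rule sum.cong[OF refl], rule sum.swap)
  also have "\<dots> = (\<Sum>a\<in>B. \<Sum>a'\<in>B. \<psi> a * cnj (\<psi> a') * (\<Sum>b\<in>B. cnj (U b a') * U b a))"
    unfolding sum_distrib_left
    by (rule trans[OF sum.swap], rule sum.cong[OF refl], rule sum.swap)
  also have "\<dots> = (\<Sum>a\<in>B. \<Sum>a'\<in>B. \<psi> a * cnj (\<psi> a') * (if a' = a then 1 else 0))"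
    using U unfolding unitary_on_def by (intro sum.cong refl) auto
  also have "\<dots> = complex_of_real (\<Sum>a\<in>B. (cmod (\<psi> a))\<^sup>2)"
    using assms(1) unfolding of_real_sum complex_norm_square by (simp add: if_distrib cong: if_cong)
  finally show ?thesis using of_real_eq_iff by blast
qed

lemma state_norm_apply_op:
  "finite B \<Longrightarrow> unitary_on B U \<Longrightarrow> state_norm B (apply_op B U \<psi>) = state_norm B \<psi>"
  by (intro state_norm_eqI sum_sq_apply_op)

lemma apply_op_diff: "apply_op B U \<psi> b - apply_op B U \<phi> b = apply_op B U (\<lambda>a. \<psi> a - \<phi> a) b"
  by (simp add: apply_op_def sum_subtractf right_diff_distrib)

lemma balance_orcl_apply: "balance_orcl N x \<psi> b = (if tilted N x (fst b) then -1 else 1) * \<psi> b"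
  by (cases b) (simp add: balance_orcl_def)

text \<open>The run in which every query answers ``tilted''. By \<open>state_norm_run_diff_le\<close>, the true run
  for \<open>x\<close> stays within \<open>hybrid_sum\<close> of it: each query contributes \<open>\<parallel>(O\<^sub>x + 1) \<phi>\<parallel>\<close>, twice the
  amplitude of the tilted run on queries balanced for \<open>x\<close>.\<close>
fun run_tilted :: "basis set \<Rightarrow> qstate \<Rightarrow> qop list \<Rightarrow> qstate" where
  "run_tilted B \<psi> [] = \<psi>"
| "run_tilted B \<psi> (U # Us) = run_tilted B (apply_op B U (\<lambda>b. - \<psi> b)) Us"

fun hybrid_sum :: "basis set \<Rightarrow> nat \<Rightarrow> nat set \<Rightarrow> qstate \<Rightarrow> qop list \<Rightarrow> real" where
  "hybrid_sum B N x \<phi> [] = 0"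
| "hybrid_sum B N x \<phi> (U # Us) = state_norm B (\<lambda>b. balance_orcl N x \<phi> b + \<phi> b)
      + hybrid_sum B N x (apply_op B U (\<lambda>b. - \<phi> b)) Us"

lemma sum_sq_run_tilted:
  assumes "finite B" "\<forall>U\<in>set Us. unitary_on B U"
  shows "(\<Sum>b\<in>B. (cmod (run_tilted B \<phi> Us b))\<^sup>2) = (\<Sum>b\<in>B. (cmod (\<phi> b))\<^sup>2)"
  using assms(2) by (induction Us arbitrary: \<phi>) (simp_all add: sum_sq_apply_op[OF assms(1)])

lemma state_norm_run_diff_le:
  assumes "finite B" "\<forall>U\<in>set Us. unitary_on B U"
  shows "state_norm B (\<lambda>b. run B N x \<psi> Us b - run_tilted B \<phi> Us b)
    \<le> state_norm B (\<lambda>b. \<psi> b - \<phi> b) + hybrid_sum B N x \<phi> Us"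
  using assms(2)
proof (induction Us arbitrary: \<psi> \<phi>)
  case Nil
  then show ?case by simp
next
  case (Cons U Us)
  let ?\<psi>' = "apply_op B U (balance_orcl N x \<psi>)"
  let ?\<phi>' = "apply_op B U (\<lambda>b. - \<phi> b)"
  have U: "unitary_on B U" using Cons.prems by simp
  have "state_norm B (\<lambda>b. run B N x \<psi> (U # Us) b - run_tilted B \<phi> (U # Us) b)
      \<le> state_norm B (\<lambda>b. ?\<psi>' b - ?\<phi>' b) + hybrid_sum B N x ?\<phi>' Us"
    using Cons by simp
  also have "state_norm B (\<lambda>b. ?\<psi>' b - ?\<phi>' b) = state_norm B (\<lambda>b. balance_orcl N x \<psi> b + \<phi> b)"
    using state_norm_apply_op[OF assms(1) U] by (simp add: apply_op_diff)
  also have "(\<lambda>b. balance_orcl N x \<psi> b + \<phi> b)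
      = (\<lambda>b. balance_orcl N x (\<lambda>a. \<psi> a - \<phi> a) b + (balance_orcl N x \<phi> b + \<phi> b))"
    by (auto simp: balance_orcl_apply algebra_simps)
  also have "state_norm B \<dots> \<le> state_norm B (balance_orcl N x (\<lambda>a. \<psi> a - \<phi> a))
      + state_norm B (\<lambda>b. balance_orcl N x \<phi> b + \<phi> b)"
    by (rule state_norm_triangle)
  also have "state_norm B (balance_orcl N x (\<lambda>a. \<psi> a - \<phi> a)) = state_norm B (\<lambda>b. \<psi> b - \<phi> b)"
    by (intro state_norm_eqI sum.cong) (simp_all add: balance_orcl_apply norm_mult)
  finally show ?case by (simp add: add.assoc)
qed

lemma state_norm_balance_orcl_plus_sq:
  "(state_norm B (\<lambda>b. balance_orcl N x \<phi> b + \<phi> b))\<^sup>2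
     = (\<Sum>b\<in>B. if tilted N x (fst b) then 0 else 4 * (cmod (\<phi> b))\<^sup>2)"
  unfolding state_norm_sq
  by (intro sum.cong refl) (simp add: balance_orcl_apply norm_mult power_mult_distrib)

lemma sum_hybrid_sum_le:
  assumes B: "finite B" and X: "finite X" and Us: "\<forall>U\<in>set Us. unitary_on B U"
    and \<phi>: "(\<Sum>b\<in>B. (cmod (\<phi> b))\<^sup>2) = 1" and \<epsilon>: "0 \<le> \<epsilon>"
    and balanced: "\<forall>b\<in>B. real (card {x\<in>X. \<not> tilted N x (fst b)}) \<le> \<epsilon> * real (card X)"
  shows "(\<Sum>x\<in>X. hybrid_sum B N x \<phi> Us) \<le> real (card X) * (2 * sqrt \<epsilon>) * real (length Us)"
  using Us \<phi>
proof (induction Us arbitrary: \<phi>)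
  case Nil
  then show ?case by simp
next
  case (Cons U Us)
  let ?n = "real (card X)"
  let ?query = "\<lambda>x. state_norm B (\<lambda>b. balance_orcl N x \<phi> b + \<phi> b)"
  have "(\<Sum>x\<in>X. (?query x)\<^sup>2)
      = (\<Sum>b\<in>B. \<Sum>x\<in>X. if tilted N x (fst b) then 0 else 4 * (cmod (\<phi> b))\<^sup>2)"
    unfolding state_norm_balance_orcl_plus_sq by (rule sum.swap)
  also have "\<dots> = (\<Sum>b\<in>B. 4 * (cmod (\<phi> b))\<^sup>2 * real (card {x\<in>X. \<not> tilted N x (fst b)}))"
    using X by (simp add: sum.If_cases Int_def mult.commute)
  also have "\<dots> \<le> (\<Sum>b\<in>B. 4 * (cmod (\<phi> b))\<^sup>2 * (\<epsilon> * ?n))"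
    using balanced by (intro sum_mono mult_left_mono) auto
  also have "\<dots> = 4 * (\<Sum>b\<in>B. (cmod (\<phi> b))\<^sup>2) * (\<epsilon> * ?n)"
    by (simp add: sum_distrib_left sum_distrib_right)
  also have "\<dots> = 4 * \<epsilon> * ?n"
    using Cons.prems(2) by simp
  finally have "(\<Sum>x\<in>X. (?query x)\<^sup>2) * ?n \<le> 4 * \<epsilon> * ?n * ?n"
    by (rule mult_right_mono) simp
  then have "(\<Sum>x\<in>X. ?query x)\<^sup>2 \<le> 4 * \<epsilon> * ?n * ?n"
    using sum_squared_le_sum_of_squares[of ?query X] by linarith
  also have "\<dots> = (?n * (2 * sqrt \<epsilon>))\<^sup>2"
    using \<epsilon> by (simp add: power_mult_distrib power2_eq_square)
  finally have "(\<Sum>x\<in>X. ?query x)\<^sup>2 \<le> (?n * (2 * sqrt \<epsilon>))\<^sup>2" .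
  then have "(\<Sum>x\<in>X. ?query x) \<le> ?n * (2 * sqrt \<epsilon>)"
    using \<epsilon> by (simp add: power2_le_iff_abs_le)
  moreover have "(\<Sum>x\<in>X. hybrid_sum B N x (apply_op B U (\<lambda>b. - \<phi> b)) Us)
      \<le> ?n * (2 * sqrt \<epsilon>) * real (length Us)"
    using Cons sum_sq_apply_op[OF B] by simp
  ultimately show ?case by (simp add: sum.distrib algebra_simps)
qed

lemma finite_admissible_queries: "finite (admissible_queries N l)"
proof (rule finite_subset)
  show "admissible_queries N l \<subseteq> {q. \<forall>i. (i \<in> {..<N} \<longrightarrow> q i \<in> {-1, 0, 1}) \<and> (i \<notin> {..<N} \<longrightarrow> q i = 0)}"
    unfolding admissible_queries_def query_string_def by auto
qed (intro finite_set_of_finite_funs; simp)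

lemma finite_basis_set: "finite (basis_set N l m)"
  unfolding basis_set_def using finite_admissible_queries by simp

lemma sum_state_norm_outputs_le:
  assumes "finite B" "finite X" and \<phi>: "(\<Sum>b\<in>B. (cmod (\<phi> b))\<^sup>2) = 1"
  shows "(\<Sum>x\<in>X. state_norm {b\<in>B. out b = x} \<phi>) \<le> sqrt (real (card X))"
proof (rule real_le_rsqrt)
  let ?s = "\<lambda>x. state_norm {b\<in>B. out b = x} \<phi>"
  have "(\<Sum>x\<in>X. (?s x)\<^sup>2) = (\<Sum>x\<in>X. \<Sum>b\<in>{b\<in>{b\<in>B. out b \<in> X}. out b = x}. (cmod (\<phi> b))\<^sup>2)"
    unfolding state_norm_sq by (intro sum.cong) auto
  also have "\<dots> = (\<Sum>b\<in>{b\<in>B. out b \<in> X}. (cmod (\<phi> b))\<^sup>2)"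
    using assms by (intro sum.group) auto
  also have "\<dots> \<le> 1"
    using assms sum_mono2[of B "{b\<in>B. out b \<in> X}" "\<lambda>b. (cmod (\<phi> b))\<^sup>2"] by auto
  finally have "(\<Sum>x\<in>X. (?s x)\<^sup>2) * real (card X) \<le> 1 * real (card X)"
    by (rule mult_right_mono) simp
  with sum_squared_le_sum_of_squares[of ?s X] show "(\<Sum>x\<in>X. ?s x)\<^sup>2 \<le> real (card X)"
    by simp
qed

lemma sqrt_success_prob_le:
  fixes \<psi>0 :: qstate and U0 :: qop
  assumes "\<forall>U\<in>set Us. unitary_on (basis_set N l m) U"
  defines "B \<equiv> basis_set N l m"
  defines "\<phi> \<equiv> apply_op B U0 \<psi>0"
  shows "sqrt (success_prob N l m x \<psi>0 U0 Us out)
    \<le> state_norm {b\<in>B. out b = x} (run_tilted B \<phi> Us) + hybrid_sum B N x \<phi> Us"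
proof -
  let ?S = "{b\<in>B. out b = x}" and ?F = "final_state N l m x \<psi>0 U0 Us" and ?T = "run_tilted B \<phi> Us"
  have "sqrt (success_prob N l m x \<psi>0 U0 Us out) = state_norm ?S (\<lambda>b. ?T b + (?F b - ?T b))"
    unfolding success_prob_def state_norm_def L2_set_def B_def by simp
  also have "\<dots> \<le> state_norm ?S ?T + state_norm ?S (\<lambda>b. ?F b - ?T b)"
    by (rule state_norm_triangle)
  also have "state_norm ?S (\<lambda>b. ?F b - ?T b) \<le> state_norm B (\<lambda>b. ?F b - ?T b)"
    using finite_basis_set unfolding B_def by (intro state_norm_mono_set) auto
  also have "\<dots> \<le> state_norm B (\<lambda>b. \<phi> b - \<phi> b) + hybrid_sum B N x \<phi> Us"
    unfolding final_state_def B_def \<phi>_def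
    using assms(1) finite_basis_set by (intro state_norm_run_diff_le)
  finally show ?thesis
    by (simp add: state_norm_def L2_set_def)
qed

text \<open>Summed over the candidates, the success amplitudes are at least \<open>|X| \<surd>(2/3)\<close>, their parts
  inside the common tilted run at most \<open>\<surd>|X|\<close>, and the rest at most the hybrid sums.\<close>
lemma query_lower_bound:
  assumes idf: "identifies N k l m \<psi>0 U0 Us out"
    and X_def: "X = {x. x \<subseteq> {..<N} \<and> card x = k}" and X3: "3 \<le> card X" and \<epsilon>: "0 \<le> \<epsilon>"
    and balanced: "\<forall>q\<in>admissible_queries N l. real (card {x\<in>X. \<not> tilted N x q}) \<le> \<epsilon> * real (card X)"
  shows "sqrt (2/3) - sqrt (1/3) \<le> 2 * real (length Us) * sqrt \<epsilon>"
proof -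
  define B where "B = basis_set N l m"
  define \<phi> where "\<phi> = apply_op B U0 \<psi>0"
  let ?n = "real (card X)" and ?T = "run_tilted B \<phi> Us"
  have finB: "finite B" and finX: "finite X"
    unfolding B_def X_def using finite_basis_set by (auto intro: finite_subset[of _ "Pow {..<N}"])
  have Us: "\<forall>U\<in>set Us. unitary_on B U" and \<phi>: "(\<Sum>b\<in>B. (cmod (\<phi> b))\<^sup>2) = 1"
    using idf finB sum_sq_apply_op unfolding identifies_def B_def \<phi>_def by auto
  have "?n * sqrt (2/3) \<le> (\<Sum>x\<in>X. sqrt (success_prob N l m x \<psi>0 U0 Us out))"
    using idf sum_mono[of X "\<lambda>_. sqrt (2/3)"] unfolding identifies_def X_def by force
  also have "\<dots> \<le> (\<Sum>x\<in>X. state_norm {b\<in>B. out b = x} ?T) + (\<Sum>x\<in>X. hybrid_sum B N x \<phi> Us)"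
    using sqrt_success_prob_le Us unfolding B_def \<phi>_def by (subst sum.distrib[symmetric]) (intro sum_mono, auto)
  also have "\<dots> \<le> sqrt ?n + ?n * (2 * sqrt \<epsilon>) * real (length Us)"
  proof (rule add_mono)
    show "(\<Sum>x\<in>X. state_norm {b\<in>B. out b = x} ?T) \<le> sqrt ?n"
      using finB finX \<phi> sum_sq_run_tilted[OF finB Us] by (intro sum_state_norm_outputs_le) auto
    show "(\<Sum>x\<in>X. hybrid_sum B N x \<phi> Us) \<le> ?n * (2 * sqrt \<epsilon>) * real (length Us)"
      using balanced by (intro sum_hybrid_sum_le[OF finB finX Us \<phi> \<epsilon>]) (auto simp: B_def basis_set_def)
  qed
  also have "sqrt ?n \<le> ?n * sqrt (1/3)"
  proof -
    have "sqrt ?n \<le> sqrt (?n\<^sup>2 * (1/3))"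
      using X3 by (intro real_sqrt_le_mono) (simp add: power2_eq_square)
    also have "\<dots> = ?n * sqrt (1/3)"
      by (simp only: real_sqrt_mult real_sqrt_abs abs_of_nat)
    finally show ?thesis .
  qed
  finally have "?n * sqrt (2/3) \<le> ?n * (sqrt (1/3) + 2 * real (length Us) * sqrt \<epsilon>)"
    by (simp add: algebra_simps)
  then show ?thesis using X3 by (simp add: mult_le_cancel_left_pos)
qed

lemma card_subsets_incl_excl:
  assumes A: "finite A" and "I \<subseteq> A" "E \<subseteq> A" "I \<inter> E = {}" "card I \<le> k"
  shows "card {x. x \<subseteq> A \<and> card x = k \<and> I \<subseteq> x \<and> x \<inter> E = {}}
    = (card A - card I - card E) choose (k - card I)"
proof -
  let ?S = "{x. x \<subseteq> A \<and> card x = k \<and> I \<subseteq> x \<and> x \<inter> E = {}}"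
  let ?T = "{y. y \<subseteq> A - I - E \<and> card y = k - card I}"
  have fin: "finite I" "finite E" using assms by (meson finite_subset)+
  have "bij_betw (\<lambda>x. x - I) ?S ?T"
  proof (rule bij_betw_byWitness[where f' = "\<lambda>y. y \<union> I"])
    show "(\<lambda>x. x - I) ` ?S \<subseteq> ?T"
      using A fin by (auto simp: card_Diff_subset intro: finite_subset)
    show "(\<lambda>y. y \<union> I) ` ?T \<subseteq> ?S"
    proof
      fix x assume "x \<in> (\<lambda>y. y \<union> I) ` ?T"
      then obtain y where y: "y \<subseteq> A - I - E" "card y = k - card I" and x: "x = y \<union> I" by blast
      have "card (y \<union> I) = card y + card I"
        using y A fin by (intro card_Un_disjoint) (auto intro: finite_subset)
      then show "x \<in> ?S" using x y assms by auto
    qed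
  qed auto
  then have "card ?S = card ?T" by (rule bij_betw_same_card)
  also have "\<dots> = card (A - I - E) choose (k - card I)"
    using A by (intro n_subsets) auto
  also have "card (A - I - E) = card A - card I - card E"
  proof -
    have "card (A - (I \<union> E)) = card A - card (I \<union> E)"
      using assms fin by (intro card_Diff_subset) auto
    moreover have "card (I \<union> E) = card I + card E"
      using assms fin by (intro card_Un_disjoint) auto
    moreover have "A - I - E = A - (I \<union> E)" by auto
    ultimately show ?thesis by simp
  qed
  finally show ?thesis .
qed

lemma binomial_absorb_two:
  assumes "0 < k" "k < n"
  shows "real (n choose k) * real k * (real n - real k) = real n * (real n - 1) * real ((n - 2) choose (k - 1))"
proof -
  have "k * (n choose k) = n * ((n - 1) choose (k - 1))"
    by (rule times_binomial_minus1_eq[OF assms(1)])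
  moreover have "(n - 1 - (k - 1)) * ((n - 1) choose (k - 1)) = (n - 1) * ((n - 2) choose (k - 1))"
    using binomial_absorb_comp[of "n - 1" "k - 1"] by (simp add: numeral_2_eq_2)
  moreover have "n - 1 - (k - 1) = n - k" using assms by simp
  ultimately have "k * (n - k) * (n choose k) = n * (n - 1) * ((n - 2) choose (k - 1))"
    by (metis mult.assoc mult.commute)
  from arg_cong[OF this, of real] show ?thesis
    using assms by (simp add: algebra_simps)
qed

definition max_binomial_prob :: "nat \<Rightarrow> real" where
  "max_binomial_prob m = real (m choose (m div 2)) / 2 ^ m"

lemma max_binomial_prob_odd:
  "max_binomial_prob (2 * n + 1) * (2 * real n + 2) = max_binomial_prob (2 * n) * (2 * real n + 1)"
proof -
  have "(n + 1) * ((2 * n + 1) choose n) = (2 * n + 1) * ((2 * n) choose n)"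
    using binomial_absorb_comp[of "2 * n + 1" n] by (simp add: mult_ac Suc_diff_le)
  from arg_cong[OF this, of real]
  have *: "real ((2 * n + 1) choose n) * (real n + 1) = real ((2 * n) choose n) * (2 * real n + 1)"
    by (simp add: algebra_simps)
  have "max_binomial_prob (2 * n + 1) * (2 * real n + 2)
      = real ((2 * n + 1) choose n) * (real n + 1) / 2 ^ (2 * n)"
    unfolding max_binomial_prob_def by (simp add: field_simps)
  also have "\<dots> = max_binomial_prob (2 * n) * (2 * real n + 1)"
    unfolding * max_binomial_prob_def by simp
  finally show ?thesis .
qed

lemma max_binomial_prob_even: "max_binomial_prob (2 * n + 2) = max_binomial_prob (2 * n + 1)"
proof -
  have "(2 * n + 1) choose (n + 1) = (2 * n + 1) choose n"
    using binomial_symmetric[of n "2 * n + 1"] by simp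
  then have "(2 * n + 2) choose (n + 1) = 2 * ((2 * n + 1) choose n)"
    using binomial_Suc_Suc[of "2 * n + 1" n] by simp
  moreover have "(2 * n + 2) div 2 = n + 1" "(2 * n + 1) div 2 = n" by simp_all
  ultimately show ?thesis
    unfolding max_binomial_prob_def by simp
qed

lemma max_binomial_prob_odd_sq_le:
  assumes "(max_binomial_prob (2 * n))\<^sup>2 * (2 * real n + 1) \<le> 1"
  shows "(max_binomial_prob (2 * n + 1))\<^sup>2 * (2 * real n + 3) \<le> 1"
proof -
  let ?e = "max_binomial_prob (2 * n)" and ?o = "max_binomial_prob (2 * n + 1)"
  have "?o\<^sup>2 * (2 * real n + 3) * (2 * real n + 2)\<^sup>2 = (?o * (2 * real n + 2))\<^sup>2 * (2 * real n + 3)"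
    by (simp add: power_mult_distrib)
  also have "\<dots> = ?e\<^sup>2 * (2 * real n + 1) * ((2 * real n + 1) * (2 * real n + 3))"
    unfolding max_binomial_prob_odd by (simp add: power_mult_distrib power2_eq_square)
  also have "\<dots> \<le> 1 * (2 * real n + 2)\<^sup>2"
    using assms by (intro mult_mono) (auto simp: power2_eq_square algebra_simps)
  finally show ?thesis by (simp add: mult_le_cancel_right_pos)
qed

lemma max_binomial_prob_sq_le: "(max_binomial_prob m)\<^sup>2 \<le> 1 / (real m + 1)"
proof -
  have even: "(max_binomial_prob (2 * n))\<^sup>2 * (2 * real n + 1) \<le> 1" for n
  proof (induction n)
    case 0
    then show ?case by (simp add: max_binomial_prob_def)
  next
    case (Suc n)
    then show ?case
      using max_binomial_prob_odd_sq_le[of n] max_binomial_prob_even[of n] by (simp add: algebra_simps)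
  qed
  have "(max_binomial_prob m)\<^sup>2 * (real m + 1) \<le> 1"
  proof (cases "even m")
    case True
    then show ?thesis using even[of "m div 2"] by (auto simp: add.commute)
  next
    case False
    then obtain n where m: "m = 2 * n + 1" using oddE by blast
    have "(max_binomial_prob m)\<^sup>2 * (real m + 1) \<le> (max_binomial_prob m)\<^sup>2 * (2 * real n + 3)"
      unfolding m by (intro mult_left_mono) auto
    then show ?thesis
      using max_binomial_prob_odd_sq_le[OF even[of n]] unfolding m by simp
  qed
  then show ?thesis by (simp add: field_simps)
qed

lemma card_subsets_by_Int:
  assumes "finite L" "M \<subseteq> L"
  shows "card {\<sigma>. \<sigma> \<subseteq> L \<and> P (\<sigma> \<inter> M)} = card {\<tau>. \<tau> \<subseteq> M \<and> P \<tau>} * 2 ^ card (L - M)"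
proof -
  have "bij_betw (\<lambda>\<sigma>. (\<sigma> \<inter> M, \<sigma> - M)) {\<sigma>. \<sigma> \<subseteq> L \<and> P (\<sigma> \<inter> M)} ({\<tau>. \<tau> \<subseteq> M \<and> P \<tau>} \<times> Pow (L - M))"
  proof (rule bij_betw_byWitness[where f' = "\<lambda>(\<tau>, \<zeta>). \<tau> \<union> \<zeta>"])
    have "(\<tau> \<union> \<zeta>) \<inter> M = \<tau>" if "\<tau> \<subseteq> M" "\<zeta> \<subseteq> L - M" for \<tau> \<zeta>
      using that by auto
    then show "(\<lambda>(\<tau>, \<zeta>). \<tau> \<union> \<zeta>) ` ({\<tau>. \<tau> \<subseteq> M \<and> P \<tau>} \<times> Pow (L - M)) \<subseteq> {\<sigma>. \<sigma> \<subseteq> L \<and> P (\<sigma> \<inter> M)}"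
      using assms by auto
  qed (use assms in auto)
  then show ?thesis
    using assms by (simp add: bij_betw_same_card card_cartesian_product card_Pow)
qed

lemma card_sign_flips_sum_eq_le:
  fixes d :: "'a \<Rightarrow> int"
  assumes "finite M" and d: "\<forall>a\<in>M. d a \<in> {-1, 1}"
  shows "card {\<tau>. \<tau> \<subseteq> M \<and> (\<Sum>a\<in>M. if a \<in> \<tau> then - d a else d a) = c}
    \<le> card M choose (card M div 2)"
proof -
  \<comment> \<open>\<open>neg \<tau>\<close> is the set of negative terms.\<close>
  define neg where "neg \<tau> = {a\<in>M. (a \<in> \<tau>) \<noteq> (d a = -1)}" for \<tau>
  let ?S = "{\<tau>. \<tau> \<subseteq> M \<and> (\<Sum>a\<in>M. if a \<in> \<tau> then - d a else d a) = c}"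
  have sum_eq: "(\<Sum>a\<in>M. if a \<in> \<tau> then - d a else d a) = int (card M) - 2 * int (card (neg \<tau>))" for \<tau>
  proof -
    have "(\<Sum>a\<in>M. if a \<in> \<tau> then - d a else d a) = (\<Sum>a\<in>M. 1 - 2 * of_bool (a \<in> neg \<tau>))"
      using d by (intro sum.cong refl) (auto simp: neg_def)
    also have "\<dots> = int (card M) - 2 * int (card (neg \<tau>))"
      using assms(1) by (simp add: sum_subtractf sum_distrib_left[symmetric] neg_def Int_def)
    finally show ?thesis .
  qed
  have recover: "\<tau> = {a\<in>M. (a \<in> neg \<tau>) \<noteq> (d a = -1)}" if "\<tau> \<subseteq> M" for \<tau>
    using that by (auto simp: neg_def)
  have "inj_on neg ?S"
  proof (rule inj_onI)
    fix \<tau> \<tau>' assume "\<tau> \<in> ?S" "\<tau>' \<in> ?S" "neg \<tau> = neg \<tau>'"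
    then show "\<tau> = \<tau>'" using recover[of \<tau>] recover[of \<tau>'] by simp
  qed
  moreover have "neg ` ?S \<subseteq> {T. T \<subseteq> M \<and> card T = nat ((int (card M) - c) div 2)}"
  proof (rule image_subsetI)
    fix \<tau> assume "\<tau> \<in> ?S"
    then have "int (card M) - 2 * int (card (neg \<tau>)) = c" by (simp add: sum_eq)
    then show "neg \<tau> \<in> {T. T \<subseteq> M \<and> card T = nat ((int (card M) - c) div 2)}"
      by (auto simp: neg_def)
  qed
  ultimately have "card ?S \<le> card {T. T \<subseteq> M \<and> card T = nat ((int (card M) - c) div 2)}"
    using assms(1) by (intro card_inj_on_le) auto
  also have "\<dots> \<le> card M choose (card M div 2)"
    using assms(1) by (simp add: n_subsets binomial_maximum)
  finally show ?thesis .
qed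

lemma card_sign_flips_sum_eq_le_max_binomial_prob:
  fixes d :: "'a \<Rightarrow> int"
  assumes "finite L" and d: "\<forall>a\<in>L. d a \<in> {-1, 0, 1}"
  shows "real (card {\<sigma>. \<sigma> \<subseteq> L \<and> (\<Sum>a\<in>L. if a \<in> \<sigma> then - d a else d a) = c})
    \<le> 2 ^ card L * max_binomial_prob (card {a\<in>L. d a \<noteq> 0})"
proof -
  define M where "M = {a\<in>L. d a \<noteq> 0}"
  have M: "M \<subseteq> L" "finite M" using assms(1) by (auto simp: M_def intro: finite_subset)
  let ?sum = "\<lambda>\<tau>. \<Sum>a\<in>M. if a \<in> \<tau> then - d a else d a"
  have "(\<Sum>a\<in>L. if a \<in> \<sigma> then - d a else d a) = ?sum \<sigma>" for \<sigma>
    using assms(1) M by (intro sum.mono_neutral_right) (auto simp: M_def)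
  moreover have "?sum \<sigma> = ?sum (\<sigma> \<inter> M)" for \<sigma>
    by (intro sum.cong) auto
  ultimately have "{\<sigma>. \<sigma> \<subseteq> L \<and> (\<Sum>a\<in>L. if a \<in> \<sigma> then - d a else d a) = c}
      = {\<sigma>. \<sigma> \<subseteq> L \<and> ?sum (\<sigma> \<inter> M) = c}"
    by presburger
  then have "card {\<sigma>. \<sigma> \<subseteq> L \<and> (\<Sum>a\<in>L. if a \<in> \<sigma> then - d a else d a) = c}
      = card {\<tau>. \<tau> \<subseteq> M \<and> ?sum \<tau> = c} * 2 ^ card (L - M)"
    using card_subsets_by_Int[OF assms(1) M(1), of "\<lambda>\<tau>. ?sum \<tau> = c"] by simp
  also have "\<dots> \<le> (card M choose (card M div 2)) * 2 ^ card (L - M)"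
    using d M by (intro mult_right_mono card_sign_flips_sum_eq_le) (auto simp: M_def)
  finally have "real (card {\<sigma>. \<sigma> \<subseteq> L \<and> (\<Sum>a\<in>L. if a \<in> \<sigma> then - d a else d a) = c})
      \<le> real ((card M choose (card M div 2)) * 2 ^ card (L - M))"
    by (simp only: of_nat_le_iff)
  also have "\<dots> = 2 ^ card L * max_binomial_prob (card M)"
  proof -
    have "card L = card (L - M) + card M"
      using M assms(1) by (simp add: card_Diff_subset card_mono)
    then show ?thesis by (simp add: max_binomial_prob_def power_add)
  qed
  finally show ?thesis unfolding M_def .
qed

lemma sum_card_filter_swap:
  assumes "finite A" "finite B"
  shows "(\<Sum>a\<in>A. card {b\<in>B. P a b}) = (\<Sum>b\<in>B. card {a\<in>A. P a b})"
proof -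
  have "(\<Sum>a\<in>A. card {b\<in>B. P a b}) = (\<Sum>a\<in>A. \<Sum>b\<in>B. of_bool (P a b) :: nat)"
    using assms by (simp add: Int_def conj_commute)
  also have "\<dots> = (\<Sum>b\<in>B. \<Sum>a\<in>A. of_bool (P a b) :: nat)"
    by (rule sum.swap)
  also have "\<dots> = (\<Sum>b\<in>B. card {a\<in>A. P a b})"
    using assms by (simp add: Int_def conj_commute)
  finally show ?thesis .
qed

lemma pair_split_poly_le:
  fixes n k :: real
  assumes "2 \<le> k" "2 * k + 1 \<le> n"
  shows "n * (n - 1) * ((k - 1) * (n - k - 1)) \<le> k * (n - k) * (n - 2) * (n - 3) + (n - 1) * (n - 2) * (n - 3)"
proof -
  define u where "u = k * (n - k)"
  have u: "4 * u \<le> n\<^sup>2"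
    unfolding u_def using sum_squares_ge_zero[of "n - 2 * k" 0] by (simp add: power2_eq_square algebra_simps)
  have n5: "5 \<le> n" using assms by linarith
  have "u * (4 * n - 6) \<le> (n\<^sup>2 / 4) * (4 * n - 6)"
    using u n5 by (intro mult_right_mono) auto
  moreover have "(n\<^sup>2 / 4) * (4 * n - 6) \<le> (n - 1) * (2 * n\<^sup>2 - 6 * n + 6)"
  proof -
    define t where "t = n - 5"
    have "(n - 1) * (2 * n\<^sup>2 - 6 * n + 6) - (n\<^sup>2 / 4) * (4 * n - 6) = t ^ 3 + 17 / 2 * t\<^sup>2 + 22 * t + 33 / 2"
      unfolding t_def by (simp add: algebra_simps power2_eq_square power3_eq_cube)
    moreover have "0 \<le> t" using n5 by (simp add: t_def)
    moreover have "0 \<le> t ^ 3 + 17 / 2 * t\<^sup>2 + 22 * t + 33 / 2" using \<open>0 \<le> t\<close> by simp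
    ultimately show ?thesis by linarith
  qed
  moreover have "u * (n - 2) * (n - 3) + (n - 1) * (n - 2) * (n - 3) - n * (n - 1) * (u - n + 1)
      = (n - 1) * (2 * n\<^sup>2 - 6 * n + 6) - u * (4 * n - 6)"
    by (simp add: algebra_simps power2_eq_square)
  moreover have "(k - 1) * (n - k - 1) = u - n + 1"
    unfolding u_def by (simp add: algebra_simps)
  ultimately show ?thesis unfolding u_def by simp
qed

text \<open>With \<open>A = n choose k\<close>, \<open>B = (n - 2) choose (k - 1)\<close> and \<open>C = (n - 4) choose (k - 2)\<close>: the
  probability \<open>4 C / A\<close> that two given pairs are both split exceeds the square of the probability
  \<open>2 B / A\<close> for a single pair by at most \<open>4 B / (n A)\<close>.\<close>
lemma pair_split_moment_le:
  fixes A B C n k :: real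
  assumes k: "2 \<le> k" and n: "2 * k + 1 \<le> n" and "0 \<le> B"
    and A: "A * k * (n - k) = n * (n - 1) * B" and C: "B * (k - 1) * (n - k - 1) = (n - 2) * (n - 3) * C"
  shows "n * A * C \<le> n * B\<^sup>2 + A * B"
proof -
  define Q where "Q = k * (n - k) * (n - 2) * (n - 3)"
  have Q: "0 < Q" unfolding Q_def using k n by (intro mult_pos_pos) auto
  have "(n * A * C) * Q = n * (A * k * (n - k)) * (C * (n - 2) * (n - 3))"
    unfolding Q_def by (simp add: algebra_simps)
  also have "\<dots> = n * (n * (n - 1) * B) * (B * (k - 1) * (n - k - 1))"
    unfolding A C by (simp add: mult_ac)
  also have "\<dots> = (n * B\<^sup>2) * (n * (n - 1) * ((k - 1) * (n - k - 1)))"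
    by (simp add: algebra_simps power2_eq_square)
  also have "\<dots> \<le> (n * B\<^sup>2) * (k * (n - k) * (n - 2) * (n - 3) + (n - 1) * (n - 2) * (n - 3))"
    using pair_split_poly_le[OF k n] assms by (intro mult_left_mono) auto
  also have "\<dots> = n * B\<^sup>2 * Q + (n * (n - 1) * B) * B * (n - 2) * (n - 3)"
    unfolding Q_def by (simp add: algebra_simps power2_eq_square)
  also have "\<dots> = (n * B\<^sup>2 + A * B) * Q"
    unfolding Q_def A[symmetric] by (simp add: algebra_simps)
  finally show ?thesis using Q by (simp add: mult_le_cancel_right_pos)
qed

lemma sq_div_Suc_le_deviation:
  fixes m \<mu> :: real
  assumes "0 < \<mu>" "0 \<le> m"
  shows "\<mu>\<^sup>2 / (m + 1) \<le> 4 * (m - \<mu>)\<^sup>2 + 2 * \<mu>"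
proof (cases "\<mu> \<le> 2 * m")
  case True
  have "\<mu>\<^sup>2 / (m + 1) \<le> \<mu>\<^sup>2 / (\<mu> / 2)"
    using assms True by (intro divide_left_mono) auto
  also have "\<dots> = 2 * \<mu>" using assms by (simp add: power2_eq_square)
  finally show ?thesis by (simp add: add_increasing)
next
  case False
  then have "(\<mu> / 2)\<^sup>2 \<le> (\<mu> - m)\<^sup>2" using assms by (intro power_mono) auto
  then have "\<mu>\<^sup>2 \<le> 4 * (m - \<mu>)\<^sup>2" by (simp add: power2_eq_square algebra_simps)
  moreover have "\<mu>\<^sup>2 / (m + 1) \<le> \<mu>\<^sup>2" using assms by (simp add: divide_le_eq)
  ultimately show ?thesis using assms by linarith
qed

lemma variance_from_moments_le:
  fixes n l s d :: real
  assumes n: "0 < n" and l: "1 \<le> l" and s: "0 \<le> s"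
    and key: "n * ((l - 1) * d) \<le> (l - 1) * s\<^sup>2 + n * s"
  shows "l * s + l * (l - 1) * d - l\<^sup>2 * s\<^sup>2 / n \<le> 2 * l * s"
proof -
  have "l * (n * ((l - 1) * d)) \<le> l * ((l - 1) * s\<^sup>2 + n * s)"
    using key l by (intro mult_left_mono) auto
  also have "\<dots> \<le> l * (l * s\<^sup>2 + n * s)"
    using l by (intro mult_left_mono add_right_mono mult_right_mono) auto
  finally have "n * (l * (l - 1) * d) - l\<^sup>2 * s\<^sup>2 \<le> n * (l * s)"
    by (simp add: algebra_simps power2_eq_square)
  then have "(n * (l * (l - 1) * d) - l\<^sup>2 * s\<^sup>2) / n \<le> l * s"
    using n by (simp add: divide_le_eq mult.commute)
  moreover have "(n * (l * (l - 1) * d) - l\<^sup>2 * s\<^sup>2) / n = l * (l - 1) * d - l\<^sup>2 * s\<^sup>2 / n"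
    using n by (simp add: diff_divide_distrib)
  ultimately show ?thesis by linarith
qed

section \<open>Balanced strings of a query\<close>

text \<open>The left pan \<open>L\<close> and right pan \<open>R\<close> of a query, matched coin by coin by \<open>g\<close>; a pair
  \<open>{a, g a}\<close> is split by \<open>x\<close> if exactly one of its coins is false.\<close>
locale paired_pans =
  fixes N k :: nat and L R :: "nat set" and g :: "nat \<Rightarrow> nat"
  assumes L_less: "L \<subseteq> {..<N}" and R_less: "R \<subseteq> {..<N}" and L_R_disjoint: "L \<inter> R = {}"
    and pairing: "bij_betw g L R" and k_pos: "1 \<le> k" and k_less: "2 * k < N" and L_nonempty: "L \<noteq> {}"
begin

definition candidates :: "nat set set" where
  "candidates = {x. x \<subseteq> {..<N} \<and> card x = k}"

definition imbalance :: "nat set \<Rightarrow> int" where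
  "imbalance x = int (card (x \<inter> L)) - int (card (x \<inter> R))"

definition pair_imbalance :: "nat set \<Rightarrow> nat \<Rightarrow> int" where
  "pair_imbalance x a = of_bool (a \<in> x) - of_bool (g a \<in> x)"

definition split_pair :: "nat \<Rightarrow> nat set \<Rightarrow> bool" where
  "split_pair a x \<longleftrightarrow> (a \<in> x) \<noteq> (g a \<in> x)"

definition split_pairs :: "nat set \<Rightarrow> nat" where
  "split_pairs x = card {a\<in>L. split_pair a x}"

text \<open>Exchanges the two coins \<open>a\<close> and \<open>g a\<close> of every pair with \<open>a \<in> \<sigma>\<close>.\<close>
definition swap :: "nat set \<Rightarrow> nat \<Rightarrow> nat" where
  "swap \<sigma> i = (if i \<in> \<sigma> then g i else if i \<in> g ` \<sigma> then inv_into L g i else i)"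

lemma finite_L: "finite L"
  using L_less finite_subset by blast

lemma finite_R: "finite R"
  using R_less finite_subset by blast

lemma finite_candidates: "finite candidates"
  unfolding candidates_def by (rule finite_subset[of _ "Pow {..<N}"]) auto

lemma card_candidates: "card candidates = N choose k"
  unfolding candidates_def using n_subsets[of "{..<N}" k] by simp

lemma g_in_R: "a \<in> L \<Longrightarrow> g a \<in> R"
  using bij_betwE[OF pairing] by blast

lemma inj_on_g: "inj_on g L"
  using pairing by (simp add: bij_betw_def)

lemma imbalance_eq_sum: "imbalance x = (\<Sum>a\<in>L. pair_imbalance x a)"
proof -
  have "(\<Sum>a\<in>L. of_bool (g a \<in> x) :: int) = (\<Sum>r\<in>R. of_bool (r \<in> x))"
    by (rule sum.reindex_bij_betw[OF pairing])
  then show ?thesis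
    using finite_L finite_R
    by (simp add: imbalance_def pair_imbalance_def sum_subtractf Int_commute Int_def)
qed

context
  fixes \<sigma> assumes \<sigma>: "\<sigma> \<subseteq> L"
begin

lemma swap_L: "a \<in> L \<Longrightarrow> swap \<sigma> a = (if a \<in> \<sigma> then g a else a)"
  using \<sigma> g_in_R L_R_disjoint unfolding swap_def by auto

lemma swap_g: "a \<in> L \<Longrightarrow> swap \<sigma> (g a) = (if a \<in> \<sigma> then a else g a)"
  using \<sigma> g_in_R L_R_disjoint inj_on_g bij_betw_inv_into_left[OF pairing]
  unfolding swap_def by (auto simp: inj_on_image_mem_iff)

lemma swap_other: "i \<notin> L \<Longrightarrow> i \<notin> R \<Longrightarrow> swap \<sigma> i = i"
  using \<sigma> g_in_R unfolding swap_def by auto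

lemma swap_cases:
  obtains "i \<in> L" | a where "a \<in> L" "i = g a" | "i \<notin> L" "i \<notin> R"
  using bij_betw_inv_into_right[OF pairing] bij_betwE[OF bij_betw_inv_into[OF pairing]] by metis

lemma swap_swap: "swap \<sigma> (swap \<sigma> i) = i"
  by (cases i rule: swap_cases) (simp_all add: swap_L swap_g swap_other)

lemma swap_less: "i < N \<Longrightarrow> swap \<sigma> i < N"
  using L_less R_less g_in_R by (cases i rule: swap_cases) (auto simp: swap_L swap_g swap_other)

lemma swap_image_swap_image: "swap \<sigma> ` swap \<sigma> ` x = x"
  by (simp add: image_image swap_swap)

lemma swap_image_candidates: "x \<in> candidates \<Longrightarrow> swap \<sigma> ` x \<in> candidates"
  using swap_less inj_on_subset[OF involuntory_imp_bij[OF swap_swap, THEN bij_is_inj]]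
  unfolding candidates_def by (auto simp: card_image)

lemma pair_imbalance_swap_image:
  "a \<in> L \<Longrightarrow> pair_imbalance (swap \<sigma> ` x) a = (if a \<in> \<sigma> then - pair_imbalance x a else pair_imbalance x a)"
proof -
  have "i \<in> swap \<sigma> ` x \<longleftrightarrow> swap \<sigma> i \<in> x" for i
    by (metis image_iff swap_swap)
  then show "a \<in> L \<Longrightarrow> ?thesis"
    by (simp add: pair_imbalance_def swap_L swap_g)
qed

lemma imbalance_swap_image:
  "imbalance (swap \<sigma> ` x) = (\<Sum>a\<in>L. if a \<in> \<sigma> then - pair_imbalance x a else pair_imbalance x a)"
  unfolding imbalance_eq_sum by (intro sum.cong refl pair_imbalance_swap_image)

lemma card_balanced_swap_image:
  "card {x\<in>candidates. imbalance (swap \<sigma> ` x) = 0} = card {x\<in>candidates. imbalance x = 0}"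
proof -
  have "{x\<in>candidates. imbalance (swap \<sigma> ` x) = 0} = image (swap \<sigma>) ` {x\<in>candidates. imbalance x = 0}"
    using swap_image_candidates swap_image_swap_image by (auto simp: image_iff) (metis)
  moreover have "inj (image (swap \<sigma>))"
    by (metis injI swap_image_swap_image)
  ultimately show ?thesis
    by (simp add: card_image inj_on_subset)
qed

end

lemma card_balanced_le:
  "real (card {x\<in>candidates. imbalance x = 0}) \<le> (\<Sum>x\<in>candidates. max_binomial_prob (split_pairs x))"
proof -
  let ?flips = "\<lambda>x. {\<sigma>\<in>Pow L. imbalance (swap \<sigma> ` x) = 0}"
  have "(\<Sum>\<sigma>\<in>Pow L. card {x\<in>candidates. imbalance (swap \<sigma> ` x) = 0})
      = (\<Sum>\<sigma>\<in>Pow L. card {x\<in>candidates. imbalance x = 0})"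
    by (intro sum.cong refl card_balanced_swap_image) auto
  then have "2 ^ card L * card {x\<in>candidates. imbalance x = 0} = (\<Sum>x\<in>candidates. card (?flips x))"
    using finite_L finite_candidates sum_card_filter_swap[of "Pow L" candidates]
    by (simp add: card_Pow)
  from arg_cong[OF this, of real]
  have "2 ^ card L * real (card {x\<in>candidates. imbalance x = 0}) = (\<Sum>x\<in>candidates. real (card (?flips x)))"
    by simp
  also have "\<dots> \<le> (\<Sum>x\<in>candidates. 2 ^ card L * max_binomial_prob (split_pairs x))"
  proof (rule sum_mono)
    fix x
    have "?flips x
        = {\<sigma>. \<sigma> \<subseteq> L \<and> (\<Sum>a\<in>L. if a \<in> \<sigma> then - pair_imbalance x a else pair_imbalance x a) = 0}"
      by (auto simp: imbalance_swap_image)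
    moreover have "{a\<in>L. pair_imbalance x a \<noteq> 0} = {a\<in>L. split_pair a x}"
      by (auto simp: pair_imbalance_def split_pair_def)
    ultimately show "real (card (?flips x)) \<le> 2 ^ card L * max_binomial_prob (split_pairs x)"
      using card_sign_flips_sum_eq_le_max_binomial_prob[OF finite_L, of "pair_imbalance x" 0]
      unfolding split_pairs_def by (simp add: pair_imbalance_def)
  qed
  finally show ?thesis
    by (simp add: sum_distrib_left[symmetric])
qed

lemma card_candidates_incl_excl:
  assumes "I \<subseteq> {..<N}" "E \<subseteq> {..<N}" "I \<inter> E = {}"
  shows "card {x\<in>candidates. I \<subseteq> x \<and> x \<inter> E = {}}
    = (if card I \<le> k then (N - card I - card E) choose (k - card I) else 0)"
proof (cases "card I \<le> k")
  case True
  then show ?thesis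
    using card_subsets_incl_excl[of "{..<N}" I E k] assms by (simp add: candidates_def)
next
  case False
  have "card I \<le> card x" if "I \<subseteq> x" "x \<subseteq> {..<N}" for x
    using that by (meson card_mono finite_lessThan finite_subset)
  then show ?thesis using False by (auto simp: candidates_def)
qed

definition split_count :: real where
  "split_count = 2 * real ((N - 2) choose (k - 1))"

definition double_split_count :: real where
  "double_split_count = (if 2 \<le> k then 4 * real ((N - 4) choose (k - 2)) else 0)"

lemma g_neq: "a \<in> L \<Longrightarrow> b \<in> L \<Longrightarrow> g a \<noteq> b"
  using g_in_R L_R_disjoint by auto

lemma of_bool_split_pair:
  "(of_bool (split_pair a x) :: real) = of_bool (a \<in> x \<and> g a \<notin> x) + of_bool (g a \<in> x \<and> a \<notin> x)"
  unfolding split_pair_def by auto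

lemma sum_in_notin:
  assumes "p < N" "r < N" "p \<noteq> r"
  shows "(\<Sum>x\<in>candidates. of_bool (p \<in> x \<and> r \<notin> x) :: real) = real ((N - 2) choose (k - 1))"
proof -
  have "{x\<in>candidates. p \<in> x \<and> r \<notin> x} = {x\<in>candidates. {p} \<subseteq> x \<and> x \<inter> {r} = {}}"
    by auto
  then show ?thesis
    using card_candidates_incl_excl[of "{p}" "{r}"] assms k_pos finite_candidates
    by (simp add: Int_def conj_commute numeral_2_eq_2)
qed

lemma sum_in_notin_pair:
  assumes "{p, q, r, s} \<subseteq> {..<N}" "card {p, q, r, s} = 4"
  shows "(\<Sum>x\<in>candidates. of_bool (p \<in> x \<and> r \<notin> x) * of_bool (q \<in> x \<and> s \<notin> x) :: real)
    = double_split_count / 4"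
proof -
  have "card {p, q} = 2" "card {r, s} = 2" "{p, q} \<inter> {r, s} = {}"
    using assms(2) by (auto simp: card_insert_if split: if_splits)
  moreover have "{x\<in>candidates. (p \<in> x \<and> r \<notin> x) \<and> (q \<in> x \<and> s \<notin> x)}
      = {x\<in>candidates. {p, q} \<subseteq> x \<and> x \<inter> {r, s} = {}}"
    by auto
  ultimately show ?thesis
    using card_candidates_incl_excl[of "{p, q}" "{r, s}"] assms(1) finite_candidates
    by (simp add: Int_def conj_commute double_split_count_def flip: of_bool_conj)
qed

lemma sum_split_pair:
  assumes "a \<in> L"
  shows "(\<Sum>x\<in>candidates. of_bool (split_pair a x) :: real) = split_count"
proof -
  have "a < N" "g a < N" "a \<noteq> g a"
    using assms L_less R_less g_in_R g_neq[OF assms assms] by auto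
  then show ?thesis
    unfolding split_count_def of_bool_split_pair by (simp add: sum.distrib sum_in_notin)
qed

lemma sum_split_pair_pair:
  assumes "a \<in> L" "b \<in> L" "a \<noteq> b"
  shows "(\<Sum>x\<in>candidates. of_bool (split_pair a x) * of_bool (split_pair b x) :: real) = double_split_count"
proof -
  have "g a \<noteq> g b" using assms inj_on_g by (auto simp: inj_on_eq_iff)
  moreover have "a \<noteq> g a" "a \<noteq> g b" "b \<noteq> g a" "b \<noteq> g b"
    using assms g_neq by metis+
  ultimately
  have "{a, b, g a, g b} \<subseteq> {..<N}" and distinct: "card {a, b, g a, g b} = 4"
    using assms L_less R_less g_in_R by (auto simp: card_insert_if)
  then have "card {a, g b, g a, b} = 4" "card {g a, b, a, g b} = 4" "card {g a, g b, a, b} = 4"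
    by (simp_all add: insert_commute)
  with \<open>{a, b, g a, g b} \<subseteq> {..<N}\<close> distinct show ?thesis
    unfolding of_bool_split_pair
    by (simp add: algebra_simps sum.distrib sum_in_notin_pair insert_commute)
qed

lemma sum_split_pairs: "(\<Sum>x\<in>candidates. real (split_pairs x)) = real (card L) * split_count"
proof -
  have "real (split_pairs x) = (\<Sum>a\<in>L. of_bool (split_pair a x))" for x
    unfolding split_pairs_def using finite_L by (simp add: Int_def)
  then have "(\<Sum>x\<in>candidates. real (split_pairs x)) = (\<Sum>a\<in>L. \<Sum>x\<in>candidates. of_bool (split_pair a x))"
    by (simp add: sum.swap[of _ candidates])
  also have "\<dots> = real (card L) * split_count"
    by (simp add: sum_split_pair)
  finally show ?thesis .
qed

lemma sum_split_pairs_sq: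
  "(\<Sum>x\<in>candidates. (real (split_pairs x))\<^sup>2)
    = real (card L) * (split_count + (real (card L) - 1) * double_split_count)"
proof -
  have "real (split_pairs x) = (\<Sum>a\<in>L. of_bool (split_pair a x))" for x
    unfolding split_pairs_def using finite_L by (simp add: Int_def)
  then have "(\<Sum>x\<in>candidates. (real (split_pairs x))\<^sup>2)
      = (\<Sum>a\<in>L. \<Sum>b\<in>L. \<Sum>x\<in>candidates. of_bool (split_pair a x) * of_bool (split_pair b x))"
    by (simp add: power2_eq_square sum_product sum.swap[of _ candidates])
  also have "\<dots> = (\<Sum>a\<in>L. split_count + (real (card L) - 1) * double_split_count)"
  proof (rule sum.cong[OF refl])
    fix a assume a: "a \<in> L"
    have same: "(\<Sum>x\<in>candidates. of_bool (split_pair a x) * of_bool (split_pair a x) :: real) = split_count"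
      using sum_split_pair[OF a] by (simp add: of_bool_conj[symmetric])
    have "(\<Sum>b\<in>L. \<Sum>x\<in>candidates. of_bool (split_pair a x) * of_bool (split_pair b x))
        = (\<Sum>x\<in>candidates. of_bool (split_pair a x) * of_bool (split_pair a x))
          + (\<Sum>b\<in>L - {a}. \<Sum>x\<in>candidates. of_bool (split_pair a x) * of_bool (split_pair b x))"
      using finite_L a by (rule sum.remove)
    also have "\<dots> = split_count + (\<Sum>b\<in>L - {a}. double_split_count)"
      unfolding same using a by (intro arg_cong2[where f = "(+)"] sum.cong refl sum_split_pair_pair) auto
    also have "\<dots> = split_count + (real (card L) - 1) * double_split_count"
      using a finite_L card_gt_0_iff[of L] by (auto simp: card_Diff_singleton)
    finally show "(\<Sum>b\<in>L. \<Sum>x\<in>candidates. of_bool (split_pair a x) * of_bool (split_pair b x))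
        = split_count + (real (card L) - 1) * double_split_count" .
  qed
  finally show ?thesis by simp
qed

lemma double_split_count_le:
  "real N * real (card candidates) * double_split_count
    \<le> real N * split_count\<^sup>2 + 2 * real (card candidates) * split_count"
proof (cases "2 \<le> k")
  case False
  then show ?thesis by (simp add: double_split_count_def split_count_def)
next
  case True
  let ?A = "real (N choose k)" and ?B = "real ((N - 2) choose (k - 1))"
    and ?C = "real ((N - 4) choose (k - 2))"
  have "real N * ?A * ?C \<le> real N * ?B\<^sup>2 + ?A * ?B"
  proof (rule pair_split_moment_le)
    show "?A * real k * (real N - real k) = real N * (real N - 1) * ?B"
      using binomial_absorb_two[of k N] k_pos k_less by simp
    have "N - 2 - 2 = N - 4" "k - 1 - 1 = k - 2" by simp_all
    then have "?B * real (k - 1) * (real (N - 2) - real (k - 1)) = real (N - 2) * (real (N - 2) - 1) * ?C"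
      using binomial_absorb_two[of "k - 1" "N - 2"] True k_less by simp
    then show "?B * (real k - 1) * (real N - real k - 1) = (real N - 2) * (real N - 3) * ?C"
      using True k_less by (simp add: algebra_simps)
  qed (use True k_less in auto)
  then show ?thesis
    using True by (simp add: double_split_count_def split_count_def card_candidates
        power2_eq_square algebra_simps)
qed

lemma two_card_L_le: "2 * card L \<le> N"
proof -
  have "card L + card R = card (L \<union> R)"
    using finite_L finite_R L_R_disjoint by (simp add: card_Un_disjoint)
  also have "\<dots> \<le> N"
    using L_less R_less card_mono[of "{..<N}" "L \<union> R"] by simp
  finally show ?thesis
    using bij_betw_same_card[OF pairing] by simp
qed

lemma one_le_card_L: "1 \<le> card L"
  using L_nonempty finite_L by (simp add: Suc_le_eq card_gt_0_iff)

lemma card_candidates_pos: "0 < card candidates"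
  using k_less by (simp add: card_candidates)

definition mean_split_pairs :: real where
  "mean_split_pairs = real (card L) * split_count / real (card candidates)"

lemma sum_split_pairs_eq_mean: "(\<Sum>x\<in>candidates. real (split_pairs x)) = real (card candidates) * mean_split_pairs"
  using card_candidates_pos by (simp add: sum_split_pairs mean_split_pairs_def)

lemma split_prob_ge: "real k / real N \<le> split_count / real (card candidates)"
proof -
  let ?n = "real (card candidates)"
  have N: "0 < real N" and n: "0 < ?n"
    using k_less card_candidates_pos by simp_all
  have "real k * ?n * (real N - 1) \<le> real k * ?n * (2 * (real N - real k))"
    using k_less by (intro mult_left_mono) auto
  also have "\<dots> = 2 * (real (N choose k) * real k * (real N - real k))"
    by (simp add: card_candidates)
  also have "\<dots> = 2 * (real N * (real N - 1) * real ((N - 2) choose (k - 1)))"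
    using k_pos k_less by (subst binomial_absorb_two) auto
  also have "\<dots> = split_count * real N * (real N - 1)"
    by (simp only: split_count_def mult_ac)
  finally have "real k * ?n \<le> split_count * real N"
    by (rule mult_right_le_imp_le) (use k_pos k_less in auto)
  then show ?thesis
    using N n by (simp add: divide_le_eq le_divide_eq mult.commute)
qed

lemma mean_split_pairs_ge: "real (card L) * real k / real N \<le> mean_split_pairs"
  unfolding mean_split_pairs_def times_divide_eq_right[symmetric]
  using split_prob_ge by (intro mult_left_mono) auto

lemma mean_split_pairs_pos: "0 < mean_split_pairs"
proof -
  have "0 < real (card L) * real k / real N"
    using one_le_card_L k_pos k_less by simp
  then show ?thesis using mean_split_pairs_ge by linarith
qed

lemma variance_split_pairs_le:
  "(\<Sum>x\<in>candidates. (real (split_pairs x) - mean_split_pairs)\<^sup>2)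
    \<le> 2 * real (card candidates) * mean_split_pairs"
proof -
  let ?n = "real (card candidates)" and ?l = "real (card L)" and ?\<mu> = mean_split_pairs
    and ?s = split_count and ?d = double_split_count
  have n: "0 < ?n" using card_candidates_pos by simp
  have "(\<Sum>x\<in>candidates. (real (split_pairs x) - ?\<mu>)\<^sup>2)
      = (\<Sum>x\<in>candidates. (real (split_pairs x))\<^sup>2) - 2 * ?\<mu> * (\<Sum>x\<in>candidates. real (split_pairs x)) + ?n * ?\<mu>\<^sup>2"
    by (simp add: power2_diff sum.distrib sum_subtractf sum_distrib_left mult_ac)
  also have "\<dots> = ?l * ?s + ?l * (?l - 1) * ?d - ?l\<^sup>2 * ?s\<^sup>2 / ?n"
    unfolding sum_split_pairs_sq sum_split_pairs_eq_mean using n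
    by (simp add: mean_split_pairs_def power2_eq_square field_simps)
  also have "\<dots> \<le> 2 * ?n * ?\<mu>"
  proof -
    \<comment> \<open>by \<open>double_split_count_le\<close>, \<open>?d \<le> ?s\<^sup>2 / ?n + 2 * ?s / N\<close>, and \<open>2 * (?l - 1) \<le> N\<close>\<close>
    have key: "?n * ((?l - 1) * ?d) \<le> (?l - 1) * ?s\<^sup>2 + ?n * ?s"
    proof -
      have "real N * (?n * ((?l - 1) * ?d)) = (?l - 1) * (real N * ?n * ?d)"
        by (simp add: algebra_simps)
      also have "\<dots> \<le> (?l - 1) * (real N * ?s\<^sup>2 + 2 * ?n * ?s)"
        using double_split_count_le one_le_card_L by (intro mult_left_mono) auto
      also have "\<dots> \<le> real N * ((?l - 1) * ?s\<^sup>2 + ?n * ?s)"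
      proof -
        have "(?l - 1) * 2 * (?n * ?s) \<le> real N * (?n * ?s)"
          using two_card_L_le n by (intro mult_right_mono) (auto simp: split_count_def)
        then show ?thesis by (simp add: algebra_simps)
      qed
      finally show ?thesis using k_less by (simp add: mult_le_cancel_left_pos)
    qed
    have "?l * ?s + ?l * (?l - 1) * ?d - ?l\<^sup>2 * ?s\<^sup>2 / ?n \<le> 2 * ?l * ?s"
      using n one_le_card_L key by (intro variance_from_moments_le) (auto simp: split_count_def)
    also have "2 * ?l * ?s = 2 * ?n * ?\<mu>"
      using n by (simp add: mean_split_pairs_def)
    finally show ?thesis .
  qed
  finally show ?thesis .
qed

lemma sum_max_binomial_prob_sq_le:
  "mean_split_pairs\<^sup>2 * (\<Sum>x\<in>candidates. (max_binomial_prob (split_pairs x))\<^sup>2)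
    \<le> 10 * real (card candidates) * mean_split_pairs"
proof -
  let ?\<mu> = mean_split_pairs and ?n = "real (card candidates)" and ?m = "\<lambda>x. real (split_pairs x)"
  have pointwise: "?\<mu>\<^sup>2 * (max_binomial_prob (split_pairs x))\<^sup>2 \<le> 4 * (?m x - ?\<mu>)\<^sup>2 + 2 * ?\<mu>" for x
  proof -
    have "?\<mu>\<^sup>2 * (max_binomial_prob (split_pairs x))\<^sup>2 \<le> ?\<mu>\<^sup>2 * (1 / (?m x + 1))"
      by (rule mult_left_mono[OF max_binomial_prob_sq_le]) simp
    also have "\<dots> \<le> 4 * (?m x - ?\<mu>)\<^sup>2 + 2 * ?\<mu>"
      using sq_div_Suc_le_deviation[OF mean_split_pairs_pos, of "?m x"] by simp
    finally show ?thesis .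
  qed
  have "?\<mu>\<^sup>2 * (\<Sum>x\<in>candidates. (max_binomial_prob (split_pairs x))\<^sup>2)
      = (\<Sum>x\<in>candidates. ?\<mu>\<^sup>2 * (max_binomial_prob (split_pairs x))\<^sup>2)"
    by (rule sum_distrib_left)
  also have "\<dots> \<le> (\<Sum>x\<in>candidates. 4 * (?m x - ?\<mu>)\<^sup>2 + 2 * ?\<mu>)"
    by (rule sum_mono) (rule pointwise)
  also have "\<dots> = 4 * (\<Sum>x\<in>candidates. (?m x - ?\<mu>)\<^sup>2) + 2 * ?n * ?\<mu>"
    by (simp add: sum.distrib sum_distrib_left)
  also have "\<dots> \<le> 10 * ?n * ?\<mu>"
    using variance_split_pairs_le by linarith
  finally show ?thesis .
qed

lemma card_balanced_sq_le:
  "(real (card {x\<in>candidates. imbalance x = 0}))\<^sup>2 * (real (card L) * real k / real N)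
    \<le> 10 * (real (card candidates))\<^sup>2"
proof -
  let ?b = "real (card {x\<in>candidates. imbalance x = 0})" and ?n = "real (card candidates)"
    and ?\<mu> = mean_split_pairs and ?p = "\<lambda>x. max_binomial_prob (split_pairs x)"
  have "?b\<^sup>2 \<le> (\<Sum>x\<in>candidates. ?p x)\<^sup>2"
    using card_balanced_le by (intro power_mono) auto
  also have "\<dots> \<le> (\<Sum>x\<in>candidates. (?p x)\<^sup>2) * ?n"
    by (rule sum_squared_le_sum_of_squares)
  finally have "?b\<^sup>2 * ?\<mu>\<^sup>2 \<le> (\<Sum>x\<in>candidates. (?p x)\<^sup>2) * ?n * ?\<mu>\<^sup>2"
    by (rule mult_right_mono) simp
  also have "\<dots> = ?n * (?\<mu>\<^sup>2 * (\<Sum>x\<in>candidates. (?p x)\<^sup>2))"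
    by (simp only: mult_ac)
  also have "\<dots> \<le> ?n * (10 * ?n * ?\<mu>)"
    using sum_max_binomial_prob_sq_le by (intro mult_left_mono) auto
  finally have "(?b\<^sup>2 * ?\<mu>) * ?\<mu> \<le> (10 * ?n\<^sup>2) * ?\<mu>"
    by (simp only: power2_eq_square mult_ac)
  then have "?b\<^sup>2 * ?\<mu> \<le> 10 * ?n\<^sup>2"
    using mean_split_pairs_pos by (rule mult_right_le_imp_le)
  moreover have "?b\<^sup>2 * (real (card L) * real k / real N) \<le> ?b\<^sup>2 * ?\<mu>"
    using mean_split_pairs_ge by (intro mult_left_mono) auto
  ultimately show ?thesis by linarith
qed

end

lemma tilted_iff_card_pans:
  assumes q: "\<forall>i. q i \<in> {-1, 0, 1}" and x: "x \<subseteq> {..<N}"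
  shows "tilted N x q \<longleftrightarrow> card (x \<inter> {i. q i = 1}) \<noteq> card (x \<inter> {i. q i = -1})"
proof -
  have "(\<Sum>i<N. q i * (if i \<in> x then 1 else 0))
      = (\<Sum>i<N. of_bool (i \<in> x \<inter> {i. q i = 1}) - of_bool (i \<in> x \<inter> {i. q i = -1}) :: int)"
  proof (intro sum.cong refl)
    fix i
    show "q i * (if i \<in> x then 1 else 0) = of_bool (i \<in> x \<inter> {i. q i = 1}) - of_bool (i \<in> x \<inter> {i. q i = -1})"
      using q[rule_format, of i] by auto
  qed
  also have "\<dots> = int (card (x \<inter> {i. q i = 1})) - int (card (x \<inter> {i. q i = -1}))"
  proof -
    have "{..<N} \<inter> {i \<in> x. P i} = x \<inter> {i. P i}" for P using x by auto
    then show ?thesis by (simp add: sum_subtractf)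
  qed
  finally show ?thesis unfolding tilted_def by simp
qed

lemma balanced_fraction_sq_le:
  assumes q: "q \<in> admissible_queries N l" and k: "1 \<le> k" "2 * k < N" and l: "1 \<le> l"
  defines "X \<equiv> {x. x \<subseteq> {..<N} \<and> card x = k}"
  shows "(real (card {x\<in>X. \<not> tilted N x q}))\<^sup>2 * (real l * real k / real N) \<le> 20 * (real (card X))\<^sup>2"
proof -
  obtain l' where "query_string N l' q" and l_le: "l \<le> card {i. q i \<noteq> 0}"
    using q unfolding admissible_queries_def by blast
  define L where "L = {i. q i = 1}"
  define R where "R = {i. q i = -1}"
  have q_vals: "\<forall>i. q i \<in> {-1, 0, 1}" and cards: "card L = l'" "card R = l'"
    and LR: "L \<subseteq> {..<N}" "R \<subseteq> {..<N}"
    using \<open>query_string N l' q\<close> unfolding query_string_def L_def R_def by (auto simp: not_less[symmetric])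
  have fin: "finite L" "finite R" using LR finite_subset by auto
  have "L \<inter> R = {}" by (auto simp: L_def R_def)
  moreover have "{i. q i \<noteq> 0} = L \<union> R" using q_vals by (auto simp: L_def R_def)
  ultimately have l_le_L: "l \<le> 2 * card L"
    using l_le fin cards by (simp add: card_Un_disjoint)
  obtain g where "bij_betw g L R"
    using finite_same_card_bij[OF fin] cards by auto
  then interpret paired_pans N k L R g
    using LR \<open>L \<inter> R = {}\<close> k l l_le_L by unfold_locales auto
  have "tilted N x q \<longleftrightarrow> imbalance x \<noteq> 0" if "x \<subseteq> {..<N}" for x
    using tilted_iff_card_pans[OF q_vals that, folded L_def R_def] unfolding imbalance_def by simp
  then have "{x\<in>X. \<not> tilted N x q} = {x\<in>candidates. imbalance x = 0}"
    by (auto simp: X_def candidates_def)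
  then have "(real (card {x\<in>X. \<not> tilted N x q}))\<^sup>2 * (real l * real k / real N)
      = (real (card {x\<in>candidates. imbalance x = 0}))\<^sup>2 * (real l * real k / real N)"
    by simp
  also have "\<dots> \<le> (real (card {x\<in>candidates. imbalance x = 0}))\<^sup>2 * ((2 * real (card L)) * real k / real N)"
    using l_le_L by (intro mult_left_mono divide_right_mono mult_right_mono) auto
  also have "\<dots> = 2 * ((real (card {x\<in>candidates. imbalance x = 0}))\<^sup>2 * (real (card L) * real k / real N))"
    by simp
  also have "\<dots> \<le> 2 * (10 * (real (card candidates))\<^sup>2)"
    using card_balanced_sq_le by simp
  finally show ?thesis by (simp add: X_def candidates_def)
qed

definition query_bound_const :: real where
  "query_bound_const = (sqrt (2/3) - sqrt (1/3)) / (2 * 20 powr (1/4))"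

lemma query_bound_const_pos: "0 < query_bound_const"
  unfolding query_bound_const_def by simp

lemma length_queries_ge:
  assumes k: "1 \<le> k" "2 * k < N" and l: "1 \<le> l" and idf: "identifies N k l m \<psi>0 U0 Us out"
  shows "query_bound_const * (real l * real k / real N) powr (1/4) \<le> real (length Us)"
proof -
  define X where "X = {x. x \<subseteq> {..<N} \<and> card x = k}"
  define r where "r = real l * real k / real N"
  define \<epsilon> where "\<epsilon> = sqrt (20 / r)"
  have r: "0 < r" unfolding r_def using k l by simp
  have "3 \<le> N" using k by simp
  also have "N \<le> card X"
    using binomial_mono[of 1 k N] k n_subsets[of "{..<N}" k] by (simp add: X_def)
  finally have X3: "3 \<le> card X" .
  have "real (card {x\<in>X. \<not> tilted N x q}) \<le> \<epsilon> * real (card X)" if "q \<in> admissible_queries N l" for q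
  proof -
    have "(real (card {x\<in>X. \<not> tilted N x q}))\<^sup>2 * r \<le> 20 * (real (card X))\<^sup>2"
      using balanced_fraction_sq_le[OF that k l] by (simp add: X_def r_def)
    then have "(real (card {x\<in>X. \<not> tilted N x q}))\<^sup>2 \<le> (\<epsilon> * real (card X))\<^sup>2"
      using r by (simp add: \<epsilon>_def power_mult_distrib pos_le_divide_eq mult.commute)
    then show ?thesis
      by (rule power2_le_imp_le) (use r in \<open>simp add: \<epsilon>_def\<close>)
  qed
  then have "sqrt (2/3) - sqrt (1/3) \<le> 2 * real (length Us) * sqrt \<epsilon>"
    using r by (intro query_lower_bound[OF idf X_def X3]) (auto simp: \<epsilon>_def)
  moreover have "sqrt \<epsilon> = 20 powr (1/4) / r powr (1/4)"
    using r by (simp add: \<epsilon>_def powr_half_sqrt[symmetric] powr_powr powr_divide)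
  ultimately show ?thesis
    unfolding r_def[symmetric] query_bound_const_def using r by (simp add: field_simps)
qed

lemma length_queries_ge_proportional:
  assumes "0 < c" "1 \<le> k" "2 * k < N" "1 \<le> l" "real N \<le> c * real l"
    and "identifies N k l m \<psi>0 U0 Us out"
  shows "query_bound_const / c powr (1/4) * real k powr (1/4) \<le> real (length Us)"
proof -
  have "real k / c \<le> real l * real k / real N"
    using assms by (simp add: field_simps mult_left_mono)
  then have "query_bound_const * (real k / c) powr (1/4)
      \<le> query_bound_const * (real l * real k / real N) powr (1/4)"
    using query_bound_const_pos assms by (intro mult_left_mono powr_mono2) auto
  also have "\<dots> \<le> real (length Us)"
    using length_queries_ge assms by blast
  finally show ?thesis
    using assms(1) by (simp add: powr_divide)
qed

theorem theorem2:
  shows "(\<exists>C>0. \<forall>N k l m \<psi>0 U0 Us out.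
            1 \<le> k \<and> 2 * k < N \<and> 1 \<le> l \<and> identifies N k l m \<psi>0 U0 Us out \<longrightarrow>
            real (length Us) \<ge> C * (real l * real k / real N) powr (1/4))
       \<and> (\<forall>c::real>0. \<exists>C>0. \<forall>N k l m \<psi>0 U0 Us out.
            1 \<le> k \<and> 2 * k < N \<and> 1 \<le> l \<and> real N \<le> c * real l \<and>
            identifies N k l m \<psi>0 U0 Us out \<longrightarrow>
            real (length Us) \<ge> C * real k powr (1/4))"
proof -
  have "0 < query_bound_const / c powr (1/4)" if "0 < c" for c :: real
    using query_bound_const_pos that by simp
  then show ?thesis
    using query_bound_const_pos length_queries_ge length_queries_ge_proportional by blast
qed

end
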